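(* Let $\phi_1,\ldots,\phi_k\in L^1(\mathbb{R}_+)$ with $\int_0^\infty\phi_i(x)\,dx = 1$ for each $1\le i\le k$, such that the closed ideal of $L^1(\mathbb{R})$ generated by $\tilde\phi_1,\ldots,\tilde\phi_k$ is $L^1(\mathbb{R})$. Then for $f\in L^\infty(\mathbb{R}_+)$ and a constant $\alpha$, the statement "$S_{\phi_i}(f)=\alpha$ for every $1\le i\le k$" is equivalent to "$K(f)=\alpha$".
   Context: $\mathbb{R}_+=[0,\infty)$; functions are complex-valued. $S_\phi(f) = \lim_{x\to\infty}\int_0^x f(t)\phi(x-t)\,dt$ (the statement $S_\phi(f)=\alpha$ means this limit exists and equals $\alpha$). $K(f)=\alpha$ means that $f(\cdot+s)$ converges as $s\to\infty$ to the constant $\alpha$ in the weak* topology of $L^\infty(\mathbb{R}_+)=L^1(\mathbb{R}_+)^*$. $\tilde\phi_i$ is $\phi_i$ extended by $0$ on $(-\infty,0)$; $L^1(\mathbb{R})$ is the convolution Banach algebra. *)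

theory Defs
  imports "HOL-Analysis.Analysis"
begin

definition conv_R :: "(real \<Rightarrow> complex) \<Rightarrow> (real \<Rightarrow> complex) \<Rightarrow> real \<Rightarrow> complex" where
  "conv_R g u = (\<lambda>x. LINT t|lborel. g t * u (x - t))"

definition ext0 :: "(real \<Rightarrow> complex) \<Rightarrow> real \<Rightarrow> complex" where
  "ext0 \<phi> = (\<lambda>x. if 0 \<le> x then \<phi> x else 0)"

text \<open>A closed ideal of the convolution algebra L^1(R), represented as a set of integrable
  functions (closed in the L^1 seminorm, hence saturated under a.e. equality).\<close>
definition closed_L1_ideal :: "(real \<Rightarrow> complex) set \<Rightarrow> bool" where
  "closed_L1_ideal I \<longleftrightarrow>
     I \<subseteq> {g. integrable lborel g} \<and>
     (\<lambda>x. 0) \<in> I \<and>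
     (\<forall>g\<in>I. \<forall>h\<in>I. (\<lambda>x. g x + h x) \<in> I) \<and>
     (\<forall>c::complex. \<forall>g\<in>I. (\<lambda>x. c * g x) \<in> I) \<and>
     (\<forall>g\<in>I. \<forall>u. integrable lborel u \<longrightarrow> conv_R g u \<in> I) \<and>
     (\<forall>h. integrable lborel h \<and>
          (\<forall>e>0. \<exists>g\<in>I. (LINT x|lborel. norm (h x - g x)) < e) \<longrightarrow> h \<in> I)"

definition gen_closed_L1_ideal :: "(real \<Rightarrow> complex) set \<Rightarrow> (real \<Rightarrow> complex) set" where
  "gen_closed_L1_ideal G = \<Inter>{I. closed_L1_ideal I \<and> G \<subseteq> I}"

definition Linf_Rplus :: "(real \<Rightarrow> complex) \<Rightarrow> bool" where
  "Linf_Rplus f \<longleftrightarrow> set_borel_measurable lborel {0..} f \<and>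
     (\<exists>B. AE x in lborel. 0 \<le> x \<longrightarrow> norm (f x) \<le> B)"

definition S_conv_lim :: "(real \<Rightarrow> complex) \<Rightarrow> (real \<Rightarrow> complex) \<Rightarrow> complex \<Rightarrow> bool" where
  "S_conv_lim \<phi> f \<alpha> \<longleftrightarrow>
     ((\<lambda>x. LINT t:{0..x}|lborel. f t * \<phi> (x - t)) \<longlongrightarrow> \<alpha>) at_top"

text \<open>K(f) = alpha: weak* convergence of the translates f(. + s) to the constant alpha
  in L^infinity(R_+) = L^1(R_+)^*, with the bilinear pairing.\<close>
definition K_lim :: "(real \<Rightarrow> complex) \<Rightarrow> complex \<Rightarrow> bool" where
  "K_lim f \<alpha> \<longleftrightarrow>
     (\<forall>g. set_integrable lborel {0..} g \<longrightarrow>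
        ((\<lambda>s. LINT t:{0..}|lborel. f (t + s) * g t) \<longlongrightarrow> \<alpha> * (LINT t:{0..}|lborel. g t)) at_top)"

end

theory Submission
  imports Defs
begin

text \<open>Replace \<open>f\<close> by a bounded Borel function \<open>F\<close> on \<open>\<real>\<close> that vanishes on the negative
  half-line and agrees a.e. with \<open>f\<close> on \<open>[0,\<infinity>)\<close>. Then \<open>S\<^sub>\<phi>(f) = \<alpha>\<close> says that
  \<open>F * \<phi>\<^sup>~(x) \<rightarrow> \<alpha> \<integral>\<phi>\<^sup>~\<close>, and \<open>K(f) = \<alpha>\<close> says the same for every \<open>h \<in> L\<^sup>1(\<real>)\<close> supported in
  \<open>(-\<infinity>,0]\<close>, because pairing \<open>f(\<cdot> + s)\<close> with \<open>g\<close> is \<open>F * h\<close> at \<open>s\<close> for the reflection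
  \<open>h(v) = g(-v)\<close>. The set of all \<open>h \<in> L\<^sup>1(\<real>)\<close> with \<open>F * h(x) \<rightarrow> \<alpha> \<integral>h\<close> is a closed,
  translation invariant ideal of \<open>L\<^sup>1(\<real>)\<close>: it is an ideal by Fubini and dominated
  convergence, and closed by the uniform bound \<open>\<bar>F * h\<bar> \<le> B \<parallel>h\<parallel>\<^sub>1\<close>. Such an ideal is all of
  \<open>L\<^sup>1(\<real>)\<close> as soon as it contains the \<open>\<phi>\<^sub>i\<^sup>~\<close>, and also as soon as it contains all functions
  supported in a half-line, since translates of those are dense.\<close>

lemma lborel_integral_reflect:
  fixes h :: "real \<Rightarrow> 'a::{banach, second_countable_topology}"
  shows "(LINT y|lborel. h (x - y)) = (LINT y|lborel. h y)"
  using lborel_integral_real_affine[of "-1" h x] by simp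

lemma lborel_integral_shift:
  fixes h :: "real \<Rightarrow> 'a::{banach, second_countable_topology}"
  shows "(LINT y|lborel. h (y + c)) = (LINT y|lborel. h y)"
  using lborel_integral_real_affine[of 1 h c] by (simp add: add.commute)

lemma lborel_integrable_reflect_iff:
  fixes h :: "real \<Rightarrow> 'a::{banach, second_countable_topology}"
  shows "integrable lborel (\<lambda>y. h (x - y)) \<longleftrightarrow> integrable lborel h"
  using lborel_integrable_real_affine_iff[where c="-1" and t=x and f=h] by simp

lemma lborel_integrable_shift_iff:
  fixes h :: "real \<Rightarrow> 'a::{banach, second_countable_topology}"
  shows "integrable lborel (\<lambda>y. h (y + c)) \<longleftrightarrow> integrable lborel h"
  using lborel_integrable_real_affine_iff[where c=1 and t=c and f=h] by (simp add: add.commute)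

lemma halfline_reflect:
  fixes h :: "real \<Rightarrow> 'a::{banach, second_countable_topology}"
  assumes "\<And>v. v > 0 \<Longrightarrow> h v = 0"
  shows "set_integrable lborel {0..} (\<lambda>t. h (-t)) \<longleftrightarrow> integrable lborel h"
    and "(LINT t:{0..}|lborel. h (-t)) = (LINT v|lborel. h v)"
proof -
  have eq: "(\<lambda>t. indicator {0..} t *\<^sub>R h (-t)) = (\<lambda>t. h (0 - t))"
    using assms by (auto simp: indicator_def)
  show "set_integrable lborel {0..} (\<lambda>t. h (-t)) \<longleftrightarrow> integrable lborel h"
    unfolding set_integrable_def eq lborel_integrable_reflect_iff ..
  show "(LINT t:{0..}|lborel. h (-t)) = (LINT v|lborel. h v)"
    unfolding set_lebesgue_integral_def eq lborel_integral_reflect ..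
qed

lemma tendsto_L1_truncation:
  fixes h :: "real \<Rightarrow> 'a::{banach, second_countable_topology}"
  assumes h: "integrable lborel h"
  shows "(\<lambda>n. LINT v|lborel. norm (h v - indicator {..real n} v *\<^sub>R h v)) \<longlonglongrightarrow> 0"
proof -
  have [measurable]: "h \<in> borel_measurable borel" using h by auto
  have "(\<lambda>n. LINT v|lborel. norm (h v - indicator {..real n} v *\<^sub>R h v))
      \<longlonglongrightarrow> (LINT (v::real)|lborel. (0::real))"
  proof (rule integral_dominated_convergence[where w="\<lambda>v. norm (h v)"])
    show "AE v in lborel. (\<lambda>n. norm (h v - indicator {..real n} v *\<^sub>R h v)) \<longlonglongrightarrow> 0"
    proof (rule AE_I2)
      fix v
      obtain N :: nat where "v \<le> real N" using real_arch_simple by blast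
      then have "\<forall>\<^sub>F n in sequentially. norm (h v - indicator {..real n} v *\<^sub>R h v) = 0"
        unfolding eventually_sequentially
        by (intro exI[of _ N]) (auto simp: indicator_def intro: order_trans)
      then show "(\<lambda>n. norm (h v - indicator {..real n} v *\<^sub>R h v)) \<longlonglongrightarrow> 0"
        by (rule tendsto_eventually)
    qed
    show "AE v in lborel. norm (norm (h v - indicator {..real n} v *\<^sub>R h v)) \<le> norm (h v)" for n
      by (intro AE_I2) (auto simp: indicator_def)
  qed (use h in auto)
  then show ?thesis by simp
qed

lemma closed_L1_ideal_contains_integrable:
  fixes I :: "(real \<Rightarrow> complex) set"
  assumes I: "closed_L1_ideal I"
    and translate: "\<And>h c. h \<in> I \<Longrightarrow> (\<lambda>y. h (y + c)) \<in> I"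
    and halfline: "\<And>h. integrable lborel h \<Longrightarrow> (\<And>v. v > 0 \<Longrightarrow> h v = 0) \<Longrightarrow> h \<in> I"
    and h: "integrable lborel h"
  shows "h \<in> I"
proof -
  have [measurable]: "h \<in> borel_measurable borel" using h by auto
  define hn where "hn n v = indicator {..real n} v *\<^sub>R h v" for n :: nat and v
  have hn_in: "hn n \<in> I" for n
  proof -
    have "integrable lborel (hn n)" unfolding hn_def using h by (intro integrable_mult_indicator) auto
    then have "(\<lambda>y. hn n (y + real n)) \<in> I"
      using lborel_integrable_shift_iff[of "hn n" "real n"] by (intro halfline) (auto simp: hn_def)
    from translate[OF this, of "- real n"] show ?thesis by simp
  qed
  have "\<exists>g\<in>I. (LINT v|lborel. norm (h v - g v)) < e" if "e > 0" for e
  proof -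
    obtain n where "(LINT v|lborel. norm (h v - hn n v)) < e"
      using order_tendstoD(2)[OF tendsto_L1_truncation[OF h] \<open>e > 0\<close>]
      by (auto simp: hn_def eventually_sequentially)
    with hn_in show ?thesis by blast
  qed
  with I h show ?thesis unfolding closed_L1_ideal_def by blast
qed

lemma conv_R_commute: "conv_R a b = conv_R b a"
proof
  fix x
  show "conv_R a b x = conv_R b a x"
    unfolding conv_R_def using lborel_integral_reflect[of "\<lambda>t. a t * b (x - t)" x]
    by (simp add: mult.commute)
qed

lemma conv_R_scale: "conv_R F (\<lambda>y. c * h y) = (\<lambda>x. c * conv_R F h x)"
  unfolding conv_R_def by (subst mult.left_commute) (rule ext integral_mult_right_zero)+

lemma conv_R_translate: "conv_R F (\<lambda>y. h (y + c)) = (\<lambda>x. conv_R F h (x + c))"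
  unfolding conv_R_def by (simp add: diff_add_eq)

lemma integrable_conv_R_integrand:
  fixes a b :: "real \<Rightarrow> complex"
  assumes a: "integrable lborel a" and b: "integrable lborel b"
  shows "integrable (lborel \<Otimes>\<^sub>M lborel) (\<lambda>(t, x). a t * b (x - t))"
proof (rule lborel_pair.Fubini_integrable)
  have [measurable]: "a \<in> borel_measurable borel" "b \<in> borel_measurable borel" using a b by auto
  show "(\<lambda>(t, x). a t * b (x - t)) \<in> borel_measurable (lborel \<Otimes>\<^sub>M lborel)" by measurable
  have "(LINT x|lborel. norm (a t * b (x - t))) = norm (a t) * (LINT x|lborel. norm (b x))" for t
    using lborel_integral_shift[of "\<lambda>x. norm (b x)" "-t"] by (simp add: norm_mult)
  then show "integrable lborel (\<lambda>t. LINT x|lborel. norm (case (t, x) of (t, x) \<Rightarrow> a t * b (x - t)))"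
    using a by simp
  have "integrable lborel (\<lambda>x. b (x + (-t)))" for t
    using b lborel_integrable_shift_iff[of b "-t"] by simp
  then show "AE t in lborel. integrable lborel (\<lambda>x. case (t, x) of (t, x) \<Rightarrow> a t * b (x - t))"
    by simp
qed

lemma integrable_conv_R:
  assumes "integrable lborel a" "integrable lborel b"
  shows "integrable lborel (conv_R a b)"
  using lborel_pair.integrable_snd[OF integrable_conv_R_integrand[OF assms]]
  unfolding conv_R_def by simp

lemma integral_conv_R:
  assumes a: "integrable lborel a" and b: "integrable lborel b"
  shows "(LINT x|lborel. conv_R a b x) = (LINT x|lborel. a x) * (LINT x|lborel. b x)"
proof -
  have "(LINT x|lborel. conv_R a b x) = (LINT t|lborel. (LINT x|lborel. a t * b (x - t)))"
    unfolding conv_R_def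
    using lborel_pair.Fubini_integral[OF integrable_conv_R_integrand[OF a b]] by simp
  also have "\<dots> = (LINT t|lborel. a t * (LINT x|lborel. b x))"
  proof (rule Bochner_Integration.integral_cong[OF refl])
    fix t
    show "(LINT x|lborel. a t * b (x - t)) = a t * (LINT x|lborel. b x)"
      using lborel_integral_shift[of b "-t"] by simp
  qed
  finally show ?thesis by simp
qed

definition conv_limit_set :: "(real \<Rightarrow> complex) \<Rightarrow> complex \<Rightarrow> (real \<Rightarrow> complex) set" where
  "conv_limit_set F \<alpha> =
     {h. integrable lborel h \<and> (conv_R F h \<longlongrightarrow> \<alpha> * (LINT x|lborel. h x)) at_top}"

lemma conv_limit_set_zero: "(\<lambda>x. 0) \<in> conv_limit_set F \<alpha>"
  unfolding conv_limit_set_def conv_R_def by simp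

lemma conv_limit_set_scale:
  assumes "h \<in> conv_limit_set F \<alpha>"
  shows "(\<lambda>x. c * h x) \<in> conv_limit_set F \<alpha>"
  using tendsto_mult_left[of "conv_R F h" _ _ c] assms
  by (simp add: conv_limit_set_def conv_R_scale mult.left_commute[of \<alpha> c])

lemma conv_limit_set_translate:
  assumes "h \<in> conv_limit_set F \<alpha>"
  shows "(\<lambda>y. h (y + c)) \<in> conv_limit_set F \<alpha>"
proof -
  have "((\<lambda>x. conv_R F h (x + c)) \<longlongrightarrow> \<alpha> * (LINT x|lborel. h x)) at_top"
    using assms filterlim_tendsto_add_at_top[OF tendsto_const filterlim_ident, of c]
    by (auto simp: conv_limit_set_def add.commute intro: filterlim_compose)
  then show ?thesis
    using assms by (simp add: conv_limit_set_def conv_R_translate lborel_integral_shift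
        lborel_integrable_shift_iff)
qed

lemma tendsto_zero_uniform_approx:
  fixes H :: "'a \<Rightarrow> 'b::real_normed_vector"
  assumes "\<And>e. e > 0 \<Longrightarrow> \<exists>G. (G \<longlongrightarrow> 0) net \<and> (\<forall>x. norm (H x - G x) \<le> e)"
  shows "(H \<longlongrightarrow> 0) net"
proof (rule tendstoI)
  fix e :: real assume "e > 0"
  then obtain G where G: "(G \<longlongrightarrow> 0) net" and close: "\<And>x. norm (H x - G x) \<le> e / 2"
    using assms[of "e / 2"] by auto
  have "\<forall>\<^sub>F x in net. norm (G x) < e / 2"
    using tendstoD[OF G, of "e / 2"] \<open>e > 0\<close> by simp
  then show "\<forall>\<^sub>F x in net. dist (H x) 0 < e"
  proof eventually_elim
    case (elim x)
    then show ?case using close[of x] norm_triangle_ineq2[of "H x" "G x"] by simp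
  qed
qed

locale bounded_kernel =
  fixes F :: "real \<Rightarrow> complex" and B :: real
  assumes measurable_kernel[measurable]: "F \<in> borel_measurable borel"
    and norm_kernel_le: "\<And>y. norm (F y) \<le> B"
begin

lemma kernel_bound_nonneg: "0 \<le> B"
  using norm_ge_zero norm_kernel_le order_trans by blast

lemma norm_conv_integrand_le: "norm (F y * h (x - y)) \<le> B * norm (h (x - y))"
  using norm_kernel_le[of y] by (simp add: norm_mult mult_right_mono)

lemma integrable_conv_integrand:
  assumes h: "integrable lborel h"
  shows "integrable lborel (\<lambda>y. F y * h (x - y))"
proof (rule Bochner_Integration.integrable_bound)
  have [measurable]: "h \<in> borel_measurable borel" using h by auto
  show "integrable lborel (\<lambda>y. B * norm (h (x - y)))"
    using h lborel_integrable_reflect_iff[of h x] by simp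
  show "(\<lambda>y. F y * h (x - y)) \<in> borel_measurable lborel" by measurable
  show "AE y in lborel. norm (F y * h (x - y)) \<le> norm (B * norm (h (x - y)))"
    using norm_conv_integrand_le kernel_bound_nonneg by (intro AE_I2) (simp add: abs_mult)
qed

lemma integral_norm_conv_integrand_le:
  assumes h: "integrable lborel h"
  shows "(LINT y|lborel. norm (F y * h (x - y))) \<le> B * (LINT y|lborel. norm (h y))"
proof -
  have "(LINT y|lborel. norm (F y * h (x - y))) \<le> (LINT y|lborel. B * norm (h (x - y)))"
    using integrable_conv_integrand[OF h] h lborel_integrable_reflect_iff[of h x]
    by (intro integral_mono norm_conv_integrand_le) auto
  also have "\<dots> = B * (LINT y|lborel. norm (h y))"
    using lborel_integral_reflect[of "\<lambda>y. norm (h y)" x] by simp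
  finally show ?thesis .
qed

lemma norm_conv_R_le:
  assumes "integrable lborel h"
  shows "norm (conv_R F h x) \<le> B * (LINT y|lborel. norm (h y))"
  unfolding conv_R_def
  using integral_norm_bound integral_norm_conv_integrand_le[OF assms] by (rule order_trans)

lemma conv_R_add:
  assumes "integrable lborel h" "integrable lborel h'"
  shows "conv_R F (\<lambda>y. h y + h' y) x = conv_R F h x + conv_R F h' x"
  unfolding conv_R_def
  using integrable_conv_integrand[OF assms(1)] integrable_conv_integrand[OF assms(2)]
  by (simp add: distrib_left)

lemma conv_R_diff:
  assumes "integrable lborel h" "integrable lborel h'"
  shows "conv_R F (\<lambda>y. h y - h' y) x = conv_R F h x - conv_R F h' x"
  unfolding conv_R_def
  using integrable_conv_integrand[OF assms(1)] integrable_conv_integrand[OF assms(2)]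
  by (simp add: right_diff_distrib)

lemma integrable_conv_conv_integrand:
  assumes a: "integrable lborel a" and b: "integrable lborel b"
  shows "integrable (lborel \<Otimes>\<^sub>M lborel) (\<lambda>(t, y). a t * (F y * b (x - t - y)))"
proof (rule lborel_pair.Fubini_integrable)
  have [measurable]: "a \<in> borel_measurable borel" "b \<in> borel_measurable borel" using a b by auto
  show "(\<lambda>(t, y). a t * (F y * b (x - t - y))) \<in> borel_measurable (lborel \<Otimes>\<^sub>M lborel)"
    by measurable
  define L where "L = (LINT y|lborel. norm (b y))"
  have bound: "(LINT y|lborel. norm (a t * (F y * b (x - t - y)))) \<le> norm (a t) * (B * L)" for t
    using mult_left_mono[OF integral_norm_conv_integrand_le[OF b, of "x - t"] norm_ge_zero]
    by (simp add: norm_mult L_def)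
  show "integrable lborel
      (\<lambda>t. LINT y|lborel. norm (case (t, y) of (t, y) \<Rightarrow> a t * (F y * b (x - t - y))))"
  proof (rule Bochner_Integration.integrable_bound)
    show "integrable lborel (\<lambda>t. norm (a t) * (B * L))" using a by simp
    show "(\<lambda>t. LINT y|lborel. norm (case (t, y) of (t, y) \<Rightarrow> a t * (F y * b (x - t - y))))
        \<in> borel_measurable lborel"
      by measurable
    have "0 \<le> L" by (simp add: L_def)
    then show "AE t in lborel. norm (LINT y|lborel. norm (case (t, y) of (t, y) \<Rightarrow> a t * (F y * b (x - t - y))))
        \<le> norm (norm (a t) * (B * L))"
      using bound kernel_bound_nonneg by (intro AE_I2) (simp add: abs_mult)
  qed
  show "AE t in lborel. integrable lborel (\<lambda>y. case (t, y) of (t, y) \<Rightarrow> a t * (F y * b (x - t - y)))"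
    using integrable_conv_integrand[OF b] by (intro AE_I2) simp
qed

lemma conv_R_left_commute:
  assumes a: "integrable lborel a" and b: "integrable lborel b"
  shows "conv_R F (conv_R a b) = conv_R a (conv_R F b)"
proof
  fix x
  have "conv_R F (conv_R a b) x = (LINT y|lborel. (LINT t|lborel. a t * (F y * b (x - t - y))))"
    unfolding conv_R_def
    by (intro Bochner_Integration.integral_cong refl)
      (simp flip: integral_mult_right_zero add: algebra_simps)
  also have "\<dots> = (LINT t|lborel. (LINT y|lborel. a t * (F y * b (x - t - y))))"
    using lborel_pair.Fubini_integral[OF integrable_conv_conv_integrand[OF a b]] by simp
  also have "\<dots> = conv_R a (conv_R F b) x"
    unfolding conv_R_def by simp
  finally show "conv_R F (conv_R a b) x = conv_R a (conv_R F b) x" .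
qed

lemma conv_limit_set_add:
  assumes "g \<in> conv_limit_set F \<alpha>" "h \<in> conv_limit_set F \<alpha>"
  shows "(\<lambda>x. g x + h x) \<in> conv_limit_set F \<alpha>"
proof -
  have g: "integrable lborel g" "(conv_R F g \<longlongrightarrow> \<alpha> * (LINT x|lborel. g x)) at_top"
    and h: "integrable lborel h" "(conv_R F h \<longlongrightarrow> \<alpha> * (LINT x|lborel. h x)) at_top"
    using assms by (auto simp: conv_limit_set_def)
  have "conv_R F (\<lambda>x. g x + h x) = (\<lambda>x. conv_R F g x + conv_R F h x)"
    using conv_R_add[OF g(1) h(1)] by blast
  then show ?thesis
    using tendsto_add[OF g(2) h(2)] g(1) h(1) by (simp add: conv_limit_set_def distrib_left)
qed

lemma conv_limit_set_conv:
  assumes g: "g \<in> conv_limit_set F \<alpha>" and u: "integrable lborel u"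
  shows "conv_R g u \<in> conv_limit_set F \<alpha>"
proof -
  have gi: "integrable lborel g" and lim: "(conv_R F g \<longlongrightarrow> \<alpha> * (LINT x|lborel. g x)) at_top"
    using g by (auto simp: conv_limit_set_def)
  have [measurable]: "g \<in> borel_measurable borel" "u \<in> borel_measurable borel" using gi u by auto
  have [measurable]: "conv_R F g \<in> borel_measurable borel" unfolding conv_R_def by measurable
  define M where "M = B * (LINT y|lborel. norm (g y))"
  have "((\<lambda>x. LINT t|lborel. u t * conv_R F g (x - t))
      \<longlongrightarrow> (LINT t|lborel. u t * (\<alpha> * (LINT x|lborel. g x)))) at_top"
  proof (rule integral_dominated_convergence_at_top[where w="\<lambda>t. norm (u t) * M"])
    show "AE t in lborel. ((\<lambda>x. u t * conv_R F g (x - t))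
        \<longlongrightarrow> u t * (\<alpha> * (LINT x|lborel. g x))) at_top"
    proof (rule AE_I2)
      fix t
      have "((\<lambda>x. conv_R F g (x + - t)) \<longlongrightarrow> \<alpha> * (LINT x|lborel. g x)) at_top"
        using lim filterlim_tendsto_add_at_top[OF tendsto_const filterlim_ident, of "-t"]
        by (auto simp: add.commute intro: filterlim_compose)
      then show "((\<lambda>x. u t * conv_R F g (x - t)) \<longlongrightarrow> u t * (\<alpha> * (LINT x|lborel. g x))) at_top"
        by (intro tendsto_mult_left) simp
    qed
    show "\<forall>\<^sub>F x in at_top. AE t in lborel. norm (u t * conv_R F g (x - t)) \<le> norm (u t) * M"
      using norm_conv_R_le[OF gi] by (intro always_eventually allI AE_I2)
        (simp add: norm_mult mult_left_mono M_def)
  qed (use u in auto)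
  moreover have "conv_R F (conv_R g u) = (\<lambda>x. LINT t|lborel. u t * conv_R F g (x - t))"
    unfolding conv_R_commute[of g u] conv_R_left_commute[OF u gi] by (simp only: conv_R_def[of u])
  ultimately have "(conv_R F (conv_R g u) \<longlongrightarrow> \<alpha> * (LINT x|lborel. conv_R g u x)) at_top"
    by (simp add: integral_conv_R[OF gi u] mult.commute mult.left_commute)
  then show ?thesis
    using integrable_conv_R[OF gi u] by (simp add: conv_limit_set_def)
qed

lemma conv_limit_set_closed:
  assumes h: "integrable lborel h"
    and approx: "\<And>e. e > 0 \<Longrightarrow> \<exists>g\<in>conv_limit_set F \<alpha>. (LINT x|lborel. norm (h x - g x)) < e"
  shows "h \<in> conv_limit_set F \<alpha>"
proof -
  define D where "D g x = conv_R F g x - \<alpha> * (LINT y|lborel. g y)" for g x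
  have D_diff_le: "norm (D h x - D g x) \<le> (B + norm \<alpha>) * (LINT y|lborel. norm (h y - g y))"
    if g: "integrable lborel g" for g x
  proof -
    have hg: "integrable lborel (\<lambda>y. h y - g y)" using h g by simp
    have "D h x - D g x = conv_R F (\<lambda>y. h y - g y) x - \<alpha> * (LINT y|lborel. h y - g y)"
      using h g by (simp add: D_def conv_R_diff algebra_simps)
    also have "norm \<dots> \<le> B * (LINT y|lborel. norm (h y - g y))
        + norm \<alpha> * (LINT y|lborel. norm (h y - g y))"
      using norm_triangle_ineq4 norm_conv_R_le[OF hg, of x]
        mult_left_mono[OF integral_norm_bound[of lborel "\<lambda>y. h y - g y"] norm_ge_zero[of \<alpha>]]
      by (fastforce simp: norm_mult intro: order_trans add_mono)
    finally show ?thesis by (simp add: distrib_right)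
  qed
  have "(D h \<longlongrightarrow> 0) at_top"
  proof (rule tendsto_zero_uniform_approx)
    fix e :: real assume "e > 0"
    define C where "C = B + norm \<alpha> + 1"
    have "C > 0" using kernel_bound_nonneg by (simp add: C_def add_nonneg_pos)
    with approx[of "e / C"] \<open>e > 0\<close> obtain g where g: "g \<in> conv_limit_set F \<alpha>"
      and close: "(LINT y|lborel. norm (h y - g y)) < e / C"
      by auto
    have gi: "integrable lborel g" and "(D g \<longlongrightarrow> 0) at_top"
      using g Lim_null[of "conv_R F g"] unfolding D_def by (auto simp: conv_limit_set_def)
    moreover have "norm (D h x - D g x) \<le> e" for x
    proof -
      have "(B + norm \<alpha>) * (LINT y|lborel. norm (h y - g y)) \<le> C * (e / C)"
        using close kernel_bound_nonneg by (intro mult_mono) (auto simp: C_def)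
      then show ?thesis using D_diff_le[OF gi, of x] \<open>C > 0\<close> by simp
    qed
    ultimately show "\<exists>G. (G \<longlongrightarrow> 0) at_top \<and> (\<forall>x. norm (D h x - G x) \<le> e)" by blast
  qed
  then show ?thesis
    using h Lim_null[of "conv_R F h"] unfolding D_def by (simp add: conv_limit_set_def)
qed

theorem closed_L1_ideal_conv_limit_set: "closed_L1_ideal (conv_limit_set F \<alpha>)"
  unfolding closed_L1_ideal_def
  using conv_limit_set_zero conv_limit_set_add conv_limit_set_scale conv_limit_set_conv
    conv_limit_set_closed
  by (auto simp: conv_limit_set_def)

end

lemma ext0_eq_indicator: "ext0 \<phi> = (\<lambda>x. indicator {0..} x *\<^sub>R \<phi> x)"
  unfolding ext0_def by (auto simp: indicator_def)

lemma integrable_ext0: "set_integrable lborel {0..} \<phi> \<Longrightarrow> integrable lborel (ext0 \<phi>)"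
  unfolding ext0_eq_indicator set_integrable_def .

lemma integral_ext0: "(LINT x|lborel. ext0 \<phi> x) = (LINT x:{0..}|lborel. \<phi> x)"
  unfolding ext0_eq_indicator set_lebesgue_integral_def ..

locale bounded_representative = bounded_kernel F B for F B +
  fixes f :: "real \<Rightarrow> complex"
  assumes measurable_restriction[measurable]: "(\<lambda>x. indicator {0..} x *\<^sub>R f x) \<in> borel_measurable borel"
    and AE_restriction_eq: "AE x in lborel. indicator {0..} x *\<^sub>R f x = F x"
    and kernel_eq_0_neg: "\<And>y. y < 0 \<Longrightarrow> F y = 0"
begin

lemma S_integral_eq_conv:
  assumes "set_integrable lborel {0..} \<phi>"
  shows "(LINT t:{0..x}|lborel. f t * \<phi> (x - t)) = conv_R F (ext0 \<phi>) x"
proof -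
  define f0 where "f0 = (\<lambda>x. indicator {0..} x *\<^sub>R f x)"
  have [measurable]: "f0 \<in> borel_measurable borel" "ext0 \<phi> \<in> borel_measurable borel"
    using integrable_ext0[OF assms] by (auto simp: f0_def)
  have "(LINT t:{0..x}|lborel. f t * \<phi> (x - t))
      = (LINT t|lborel. indicator {0..x} t *\<^sub>R (f0 t * ext0 \<phi> (x - t)))"
    unfolding set_lebesgue_integral_def f0_def
    by (intro Bochner_Integration.integral_cong refl) (auto simp: indicator_def ext0_def)
  also have "\<dots> = (LINT t|lborel. indicator {0..x} t *\<^sub>R (F t * ext0 \<phi> (x - t)))"
  proof (rule integral_cong_AE)
    show "AE t in lborel. indicator {0..x} t *\<^sub>R (f0 t * ext0 \<phi> (x - t))
        = indicator {0..x} t *\<^sub>R (F t * ext0 \<phi> (x - t))"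
      using AE_restriction_eq unfolding f0_def by eventually_elim simp
  qed measurable
  also have "\<dots> = conv_R F (ext0 \<phi>) x"
    unfolding conv_R_def
    by (intro Bochner_Integration.integral_cong refl) (auto simp: indicator_def ext0_def kernel_eq_0_neg)
  finally show ?thesis .
qed

lemma S_conv_lim_iff:
  assumes "set_integrable lborel {0..} \<phi>" and "(LINT x:{0..}|lborel. \<phi> x) = 1"
  shows "S_conv_lim \<phi> f \<alpha> \<longleftrightarrow> ext0 \<phi> \<in> conv_limit_set F \<alpha>"
proof -
  have "conv_R F (ext0 \<phi>) = (\<lambda>x. LINT t:{0..x}|lborel. f t * \<phi> (x - t))"
    using S_integral_eq_conv[OF assms(1)] by auto
  then show ?thesis
    using assms integrable_ext0[OF assms(1)]
    by (simp add: S_conv_lim_def conv_limit_set_def integral_ext0)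
qed

lemma pairing_eq_conv:
  assumes h: "integrable lborel h" and h0: "\<And>v. v > 0 \<Longrightarrow> h v = 0" and "s \<ge> 0"
  shows "(LINT t:{0..}|lborel. f (t + s) * h (-t)) = conv_R F h s"
proof -
  define f0 where "f0 = (\<lambda>x. indicator {0..} x *\<^sub>R f x)"
  have [measurable]: "f0 \<in> borel_measurable borel" "h \<in> borel_measurable borel"
    using h by (auto simp: f0_def)
  have "(LINT t:{0..}|lborel. f (t + s) * h (-t)) = (LINT t|lborel. f0 (t + s) * h (s - (t + s)))"
    unfolding set_lebesgue_integral_def f0_def
    using \<open>s \<ge> 0\<close> h0 by (intro Bochner_Integration.integral_cong refl) (auto simp: indicator_def)
  also have "\<dots> = (LINT y|lborel. f0 y * h (s - y))"
    by (rule lborel_integral_shift[of "\<lambda>y. f0 y * h (s - y)"])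
  also have "\<dots> = conv_R F h s"
    unfolding conv_R_def
  proof (rule integral_cong_AE)
    show "AE y in lborel. f0 y * h (s - y) = F y * h (s - y)"
      using AE_restriction_eq unfolding f0_def by eventually_elim simp
  qed measurable
  finally show ?thesis .
qed

lemma K_lim_iff:
  "K_lim f \<alpha> \<longleftrightarrow>
     (\<forall>h. integrable lborel h \<and> (\<forall>v>0. h v = 0) \<longrightarrow> h \<in> conv_limit_set F \<alpha>)"
proof (intro iffI allI impI)
  fix h :: "real \<Rightarrow> complex"
  assume K: "K_lim f \<alpha>" and h: "integrable lborel h \<and> (\<forall>v>0. h v = 0)"
  then have "((\<lambda>s. LINT t:{0..}|lborel. f (t + s) * h (-t)) \<longlongrightarrow> \<alpha> * (LINT v|lborel. h v)) at_top"
    using halfline_reflect[of h] K[unfolded K_lim_def, rule_format, of "\<lambda>t. h (-t)"] by simp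
  moreover have "\<forall>\<^sub>F s in at_top. (LINT t:{0..}|lborel. f (t + s) * h (-t)) = conv_R F h s"
    using eventually_ge_at_top[of "0::real"]
    by eventually_elim (use h in \<open>auto intro: pairing_eq_conv\<close>)
  ultimately show "h \<in> conv_limit_set F \<alpha>"
    using h by (simp add: conv_limit_set_def tendsto_cong)
next
  assume H: "\<forall>h. integrable lborel h \<and> (\<forall>v>0. h v = 0) \<longrightarrow> h \<in> conv_limit_set F \<alpha>"
  show "K_lim f \<alpha>" unfolding K_lim_def
  proof (intro allI impI)
    fix g :: "real \<Rightarrow> complex"
    assume g: "set_integrable lborel {0..} g"
    define h where "h v = (if v \<le> 0 then g (-v) else 0)" for v
    have h0: "h v = 0" if "v > 0" for v using that by (auto simp: h_def)
    have hg: "h (-t) = g t" if "t \<in> {0..}" for t using that by (simp add: h_def)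
    have "set_integrable lborel {0..} (\<lambda>t. h (-t)) \<longleftrightarrow> set_integrable lborel {0..} g"
      using hg by (intro set_integrable_cong) auto
    then have hi: "integrable lborel h" using g halfline_reflect(1)[of h, OF h0] by simp
    have pairing_eq: "(LINT t:{0..}|lborel. c t * g t) = (LINT t:{0..}|lborel. c t * h (-t))" for c
      using hg by (intro set_lebesgue_integral_cong) auto
    have "(conv_R F h \<longlongrightarrow> \<alpha> * (LINT v|lborel. h v)) at_top"
      using H h0 hi by (simp add: conv_limit_set_def)
    moreover have "\<forall>\<^sub>F s in at_top. (LINT t:{0..}|lborel. f (t + s) * g t) = conv_R F h s"
      using eventually_ge_at_top[of "0::real"]
      by eventually_elim (use pairing_eq pairing_eq_conv[of h, OF hi h0] in simp)
    moreover have "(LINT t:{0..}|lborel. g t) = (LINT v|lborel. h v)"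
      using pairing_eq[of "\<lambda>_. 1"] halfline_reflect(2)[of h, OF h0] by simp
    ultimately show "((\<lambda>s. LINT t:{0..}|lborel. f (t + s) * g t)
        \<longlongrightarrow> \<alpha> * (LINT t:{0..}|lborel. g t)) at_top"
      by (simp add: tendsto_cong)
  qed
qed

end

lemma Linf_Rplus_bounded_representative:
  assumes "Linf_Rplus f"
  obtains F B where "bounded_representative F B f"
proof -
  define f0 where "f0 = (\<lambda>x. indicator {0..} x *\<^sub>R f x)"
  obtain B where [measurable]: "f0 \<in> borel_measurable borel"
    and B: "AE x in lborel. 0 \<le> x \<longrightarrow> norm (f x) \<le> B"
    using assms unfolding Linf_Rplus_def set_borel_measurable_def f0_def by auto
  define F where "F x = (if norm (f0 x) \<le> \<bar>B\<bar> then f0 x else 0)" for x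
  have "bounded_representative F \<bar>B\<bar> f"
  proof
    show "F \<in> borel_measurable borel" unfolding F_def by measurable
    show "norm (F y) \<le> \<bar>B\<bar>" for y by (simp add: F_def)
    show "(\<lambda>x. indicator {0..} x *\<^sub>R f x) \<in> borel_measurable borel"
      by (fold f0_def) measurable
    show "AE x in lborel. indicator {0..} x *\<^sub>R f x = F x"
      using B by eventually_elim (auto simp: F_def f0_def indicator_def)
    show "F y = 0" if "y < 0" for y using that by (simp add: F_def f0_def)
  qed
  then show ?thesis by (rule that)
qed

theorem corollary3p3:
  fixes k :: nat and \<phi> :: "nat \<Rightarrow> real \<Rightarrow> complex"
    and f :: "real \<Rightarrow> complex" and \<alpha> :: complex
  assumes L1: "\<And>i. i \<in> {1..k} \<Longrightarrow> set_integrable lborel {0..} (\<phi> i)"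
    and norm1: "\<And>i. i \<in> {1..k} \<Longrightarrow> (LINT x:{0..}|lborel. \<phi> i x) = 1"
    and gen: "gen_closed_L1_ideal ((\<lambda>i. ext0 (\<phi> i)) ` {1..k}) = {g. integrable lborel g}"
    and f: "Linf_Rplus f"
  shows "(\<forall>i\<in>{1..k}. S_conv_lim (\<phi> i) f \<alpha>) \<longleftrightarrow> K_lim f \<alpha>"
proof -
  obtain F B where "bounded_representative F B f"
    using Linf_Rplus_bounded_representative[OF f] .
  then interpret bounded_representative F B f .
  let ?J = "conv_limit_set F \<alpha>"
  have J: "closed_L1_ideal ?J" by (rule closed_L1_ideal_conv_limit_set)
  have J_L1: "?J \<subseteq> {g. integrable lborel g}" by (auto simp: conv_limit_set_def)
  have "(\<forall>i\<in>{1..k}. S_conv_lim (\<phi> i) f \<alpha>) \<longleftrightarrow> (\<lambda>i. ext0 (\<phi> i)) ` {1..k} \<subseteq> ?J"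
    using S_conv_lim_iff[OF L1 norm1] by auto
  also have "\<dots> \<longleftrightarrow> ?J = {g. integrable lborel g}"
    using J J_L1 gen integrable_ext0[OF L1] unfolding gen_closed_L1_ideal_def by blast
  also have "\<dots> \<longleftrightarrow> K_lim f \<alpha>"
    using closed_L1_ideal_contains_integrable[OF J conv_limit_set_translate] J_L1
    unfolding K_lim_iff by blast
  finally show ?thesis .
qed

end
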